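(* Let $n\ge 8$ and let $\widetilde\Delta_n$ be the connected component of $\widetilde P_0(S_n)$ containing $[(1\,2)]$. Then every vertex $[\psi]$ of $\widetilde P_0(S_n)$ lies in $\widetilde\Delta_n$, except possibly those for which $o(\psi)$ is a prime $p$ with $p\ge n-1$.
   Context: $\widetilde P_0(S_n)$: vertex set $\{[x]:x\in S_n\setminus\{\mathrm{id}\}\}$ with $[x]=\{y:\langle y\rangle=\langle x\rangle\}$, distinct $[x],[y]$ adjacent iff some representatives are one a positive power of the other. *)

theory Defs
  imports "HOL-Algebra.Sym_Groups" "HOL-Algebra.Multiplicative_Group" "HOL-Computational_Algebra.Primes"
begin

definition pclass :: "('a, 'b) monoid_scheme \<Rightarrow> 'a \<Rightarrow> 'a set" where
  "pclass G x = {y \<in> carrier G. generate G {y} = generate G {x}}"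

definition rpg_vertices :: "('a, 'b) monoid_scheme \<Rightarrow> 'a set set" where
  "rpg_vertices G = {pclass G x | x. x \<in> carrier G \<and> x \<noteq> \<one>\<^bsub>G\<^esub>}"

definition rpg_adj :: "('a, 'b) monoid_scheme \<Rightarrow> 'a set \<Rightarrow> 'a set \<Rightarrow> bool" where
  "rpg_adj G u v \<longleftrightarrow> u \<in> rpg_vertices G \<and> v \<in> rpg_vertices G \<and> u \<noteq> v \<and>
     (\<exists>x\<in>u. \<exists>y\<in>v. \<exists>k::nat. k > 0 \<and> (x = y [^]\<^bsub>G\<^esub> k \<or> y = x [^]\<^bsub>G\<^esub> k))"

definition rpg_connected :: "('a, 'b) monoid_scheme \<Rightarrow> 'a set \<Rightarrow> 'a set \<Rightarrow> bool" where
  "rpg_connected G u v \<longleftrightarrow> u \<in> rpg_vertices G \<and> v \<in> rpg_vertices G \<and> (rpg_adj G)\<^sup>*\<^sup>* u v"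

end

theory Submission
  imports Defs
begin

text \<open>Two commuting elements of coprime orders are linked, since both are powers of
  their product. A nonidentity \<open>\<psi>\<close> is linked to a power \<open>g\<close> of prime order \<open>q\<close>, and
  \<open>g\<close> is linked to \<open>(1 2)\<close> by such commuting steps: any two transpositions through
  a 3-cycle on three further points; an element of odd prime order fixing two points
  through the transposition of these points; an involution through an element of order 3
  fixing two points (here \<open>n \<ge> 8\<close> is used); an element of odd prime order with two
  nontrivial orbits through the involution exchanging them. What remains is a \<open>q\<close>-cycle
  with at most one fixed point; then \<open>q \<ge> n - 1\<close>, and \<open>\<psi>\<close>, which commutes with \<open>g\<close>,
  is a power of \<open>g\<close>, so it has order \<open>q\<close>.\<close>

definition rpg_linked :: "('a, 'b) monoid_scheme \<Rightarrow> 'a \<Rightarrow> 'a \<Rightarrow> bool" where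
  "rpg_linked G x y \<longleftrightarrow> rpg_connected G (pclass G x) (pclass G y)"

lemma symp_rpg_adj: "symp (rpg_adj G)"
  unfolding rpg_adj_def symp_def by blast

lemma rpg_linked_sym: "rpg_linked G x y \<Longrightarrow> rpg_linked G y x"
  using symp_rtranclp[OF symp_rpg_adj]
  unfolding rpg_linked_def rpg_connected_def symp_def by blast

lemma rpg_linked_trans: "rpg_linked G x y \<Longrightarrow> rpg_linked G y z \<Longrightarrow> rpg_linked G x z"
  unfolding rpg_linked_def rpg_connected_def by auto

context group
begin

lemma rpg_linked_pow:
  assumes x: "x \<in> carrier G" "x \<noteq> \<one>" and xk: "x [^] (k::nat) \<noteq> \<one>"
  shows "rpg_linked G x (x [^] k)"
proof -
  have vertices: "pclass G x \<in> rpg_vertices G" "pclass G (x [^] k) \<in> rpg_vertices G"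
    using x xk unfolding rpg_vertices_def by auto
  have members: "x \<in> pclass G x" "x [^] k \<in> pclass G (x [^] k)"
    using x unfolding pclass_def by auto
  have "k > 0" using xk by (cases k) auto
  then have "pclass G x = pclass G (x [^] k) \<or> rpg_adj G (pclass G x) (pclass G (x [^] k))"
    using vertices members unfolding rpg_adj_def by blast
  then show ?thesis
    unfolding rpg_linked_def rpg_connected_def using vertices by auto
qed

text \<open>If \<open>ord y * u = ord x * v + 1\<close> then \<open>(x \<otimes> y) [^] (ord y * u) = x\<close>, and
  symmetrically for \<open>y\<close>.\<close>
lemma rpg_linked_commuting_coprime:
  assumes xy: "x \<in> carrier G" "y \<in> carrier G" and comm: "x \<otimes> y = y \<otimes> x"
    and cop: "coprime (ord x) (ord y)" and ne: "x \<noteq> \<one>" "y \<noteq> \<one>"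
  shows "rpg_linked G x y"
proof -
  have "ord x \<noteq> 0" "ord y \<noteq> 0"
    using cop ne ord_eq_1[OF xy(1)] ord_eq_1[OF xy(2)]
    by (metis coprime_0_left_iff coprime_0_right_iff nat_dvd_1_iff_1)+
  moreover have "gcd (ord x) (ord y) = 1" "gcd (ord y) (ord x) = 1"
    using cop by (simp_all add: gcd.commute)
  ultimately obtain u v u' v' where
    uv: "ord y * u = ord x * v + 1" and uv': "ord x * u' = ord y * v' + 1"
    using bezout_nat by metis
  define z where "z = x \<otimes> y"
  have z: "z \<in> carrier G" using xy z_def by simp
  have pow_z: "z [^] k = x [^] k \<otimes> y [^] k" for k :: nat
    unfolding z_def using pow_mult_distrib[OF comm xy] .
  have x_ord: "x [^] (ord x * k) = \<one>" and y_ord: "y [^] (ord y * k) = \<one>" for k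
    using xy by (simp_all add: pow_eq_id)
  have "z [^] (ord y * u) = x"
    using pow_z[of "ord y * u"] uv x_ord[of v] y_ord[of u] xy by (simp add: nat_pow_mult)
  moreover have "z [^] (ord x * u') = y"
    using pow_z[of "ord x * u'"] uv' x_ord[of u'] y_ord[of v'] xy by (simp add: nat_pow_mult)
  ultimately have "rpg_linked G z x" "rpg_linked G z y"
    using rpg_linked_pow[OF z] ne by (metis nat_pow_one)+
  then show ?thesis by (rule rpg_linked_trans[OF rpg_linked_sym])
qed

end

lemma sym_group_pow: "x [^]\<^bsub>sym_group n\<^esub> (k::nat) = x ^^ k"
  by (induction k) (auto simp: sym_group_def funpow_swap1)

lemma sym_group_ord_eq_prime:
  assumes "x permutes {1..n}" "x \<noteq> id" "x ^^ p = id" "prime p"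
  shows "group.ord (sym_group n) x = p"
proof -
  interpret group "sym_group n" by (rule sym_group_is_group)
  have x: "x \<in> carrier (sym_group n)" using assms(1) by (simp add: sym_group_carrier)
  have "ord x dvd p" "ord x \<noteq> 1"
    using assms pow_eq_id[OF x, of p] ord_eq_1[OF x] by (simp_all add: sym_group_pow sym_group_one)
  then show ?thesis using assms(4) unfolding prime_nat_iff by blast
qed

lemma sym_group_linked_commuting_primes:
  assumes "x permutes {1..n}" "y permutes {1..n}" "x \<circ> y = y \<circ> x" "x \<noteq> id" "y \<noteq> id"
    and "x ^^ p = id" "y ^^ q = id" "prime p" "prime q" "p \<noteq> q"
  shows "rpg_linked (sym_group n) x y"
proof -
  interpret group "sym_group n" by (rule sym_group_is_group)
  show ?thesis
    using assms sym_group_ord_eq_prime[of x n p] sym_group_ord_eq_prime[of y n q]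
    by (intro rpg_linked_commuting_coprime)
      (auto simp: sym_group_carrier sym_group_mult sym_group_one primes_coprime)
qed

lemma commute_if_conjugation_fixes:
  assumes "bij p" "p \<circ> f \<circ> inv' p = f"
  shows "p \<circ> f = f \<circ> p"
proof -
  have "p \<circ> f = (p \<circ> f \<circ> inv' p) \<circ> p"
    using bij_is_inj[OF assms(1)] by (simp add: comp_assoc)
  then show ?thesis using assms(2) by simp
qed

lemma commute_cycle_of_list:
  assumes "bij p" "cycle cs" "map p cs = cs"
  shows "p \<circ> cycle_of_list cs = cycle_of_list cs \<circ> p"
  using conjugation_of_cycle[OF assms(2,1)] assms by (intro commute_if_conjugation_fixes) auto

lemma three_cycle:
  assumes "distinct [a, b, c]" "{a, b, c} \<subseteq> S"
  shows "cycle_of_list [a, b, c] permutes S" "cycle_of_list [a, b, c] \<noteq> id"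
    "cycle_of_list [a, b, c] ^^ 3 = id"
proof -
  show "cycle_of_list [a, b, c] permutes S"
    using cycle_permutes[of "[a, b, c]"] assms(2) by (auto intro: permutes_subset)
  have "cycle_of_list [a, b, c] a = b" using assms(1) by simp
  then show "cycle_of_list [a, b, c] \<noteq> id" using assms(1) by (metis distinct_length_2_or_more id_apply)
  show "cycle_of_list [a, b, c] ^^ 3 = id"
    using cycle_is_id_root[OF assms(1)] by (simp add: numeral_3_eq_3)
qed

lemma obtain_fresh:
  assumes "finite A" "length xs < card A"
  obtains x where "x \<in> A" "x \<notin> set xs"
proof -
  have "\<not> A \<subseteq> set xs"
    using card_mono[of "set xs" A] card_length[of xs] assms(2) by auto
  then show ?thesis using that by blast
qed

lemma rpg_linked_transpose_if_fixes:
  assumes x: "x permutes {1..n}" "x \<noteq> id" "x ^^ p = id" "prime p" "p \<noteq> 2"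
    and ab: "a \<in> {1..n}" "b \<in> {1..n}" "a \<noteq> b" "x a = a" "x b = b"
  shows "rpg_linked (sym_group n) x (transpose a b)"
proof -
  have "cycle_of_list [a, b] = transpose a b" by simp
  then have "x \<circ> transpose a b = transpose a b \<circ> x"
    using commute_cycle_of_list[of x "[a, b]"] permutes_bij[OF x(1)] ab by simp
  moreover have "transpose a b \<noteq> id" using ab(3) by (metis id_apply transpose_apply_first)
  moreover have "transpose a b ^^ 2 = id"
    by (simp add: numeral_2_eq_2 fun_eq_iff transpose_def)
  ultimately show ?thesis using x ab
    by (intro sym_group_linked_commuting_primes) (auto simp: permutes_swap_id transpose_eq_iff)
qed

lemma rpg_linked_transpositions:
  assumes n: "n \<ge> 7" and ab: "a \<in> {1..n}" "b \<in> {1..n}" "a \<noteq> b"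
    and cd: "c \<in> {1..n}" "d \<in> {1..n}" "c \<noteq> d"
  shows "rpg_linked (sym_group n) (transpose a b) (transpose c d)"
proof -
  obtain e where e: "e \<in> {1..n}" "e \<notin> set [a, b, c, d]"
    using obtain_fresh[of "{1..n}" "[a, b, c, d]"] n by auto
  obtain f where f: "f \<in> {1..n}" "f \<notin> set [a, b, c, d, e]"
    using obtain_fresh[of "{1..n}" "[a, b, c, d, e]"] n by auto
  obtain g where g: "g \<in> {1..n}" "g \<notin> set [a, b, c, d, e, f]"
    using obtain_fresh[of "{1..n}" "[a, b, c, d, e, f]"] n by auto
  have efg: "distinct [e, f, g]" "{e, f, g} \<subseteq> {1..n}" using e f g by auto
  note k = three_cycle[OF efg]
  have fixes_abcd: "cycle_of_list [e, f, g] x = x" if "x \<in> {a, b, c, d}" for x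
    using that e f g by (intro id_outside_supp) auto
  have "rpg_linked (sym_group n) (cycle_of_list [e, f, g]) (transpose a b)"
    using ab fixes_abcd by (intro rpg_linked_transpose_if_fixes[OF k(1,2,3)]) auto
  moreover have "rpg_linked (sym_group n) (cycle_of_list [e, f, g]) (transpose c d)"
    using cd fixes_abcd by (intro rpg_linked_transpose_if_fixes[OF k(1,2,3)]) auto
  ultimately show ?thesis by (rule rpg_linked_trans[OF rpg_linked_sym])
qed

lemma rpg_linked_odd_prime_fixing_two:
  assumes n: "n \<ge> 7" and x: "x permutes {1..n}" "x \<noteq> id" "x ^^ p = id" "prime p" "p \<noteq> 2"
    and ab: "a \<in> {1..n}" "b \<in> {1..n}" "a \<noteq> b" "x a = a" "x b = b"
  shows "rpg_linked (sym_group n) x (transpose 1 2)"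
  using rpg_linked_transpose_if_fixes[OF x ab] rpg_linked_transpositions[OF n ab(1-3)] n
  by (auto intro: rpg_linked_trans)

lemma involution_commutes_with_three_cycle_pair:
  assumes i: "i \<circ> i = id" and dist: "distinct [a, b, c, i a, i b, i c]"
  shows "i \<circ> (cycle_of_list [a, b, c] \<circ> cycle_of_list [i a, i b, i c])
       = (cycle_of_list [a, b, c] \<circ> cycle_of_list [i a, i b, i c]) \<circ> i"
proof -
  let ?C = "cycle_of_list [a, b, c]" and ?D = "cycle_of_list [i a, i b, i c]"
  have bij: "bij i" using o_bij[OF i i] .
  have inv: "inv' i = i" using inv_unique_comp[OF i i] .
  have ii: "i (i x) = x" for x using i by (metis comp_apply id_apply)
  have "i \<circ> ?C \<circ> i = ?D"
    using conjugation_of_cycle[of "[a, b, c]" i] bij dist inv by simp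
  moreover have "i \<circ> ?D \<circ> i = ?C"
    using conjugation_of_cycle[of "[i a, i b, i c]" i] bij dist inv ii by simp
  moreover have "?C \<circ> ?D = ?D \<circ> ?C"
    using dist by (intro cycles_commute) auto
  moreover have "i \<circ> (?C \<circ> ?D) \<circ> i = (i \<circ> ?C \<circ> i) \<circ> (i \<circ> ?D \<circ> i)"
    using i by (simp add: comp_assoc flip: comp_assoc[of i i])
  ultimately have "i \<circ> (?C \<circ> ?D) \<circ> inv' i = ?C \<circ> ?D"
    using inv by simp
  then show ?thesis by (rule commute_if_conjugation_fixes[OF bij])
qed

lemma involution_obtain_three_pairs:
  assumes i: "i \<circ> i = id" and M: "finite M" "card M \<ge> 5" "\<And>x. x \<in> M \<Longrightarrow> i x \<noteq> x"
  obtains a b c where "{a, b, c} \<subseteq> M" "distinct [a, b, c, i a, i b, i c]"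
proof -
  have ii: "i (i x) = x" for x using i by (metis comp_apply id_apply)
  then have swap: "i x = y \<longleftrightarrow> x = i y" for x y by metis
  obtain a where a: "a \<in> M" using obtain_fresh[OF M(1), of "[]"] M(2) by auto
  obtain b where b: "b \<in> M" "b \<notin> set [a, i a]"
    using obtain_fresh[OF M(1), of "[a, i a]"] M(2) by auto
  obtain c where c: "c \<in> M" "c \<notin> set [a, i a, b, i b]"
    using obtain_fresh[OF M(1), of "[a, i a, b, i b]"] M(2) by auto
  have "distinct [a, b, c, i a, i b, i c]"
    using a b c M(3)[of a] M(3)[of b] M(3)[of c] by (auto simp: swap ii)
  then show ?thesis using a b c that by blast
qed

text \<open>\<open>y\<close> is a 3-cycle on fixed points of \<open>i\<close>, or \<open>(a b c)(i a i b i c)\<close> for three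
  2-cycles \<open>(a i a)\<close> of \<open>i\<close>; the list \<open>ys\<close> contains its support.\<close>
lemma involution_centralizes_order_three:
  fixes n :: nat
  assumes n: "n \<ge> 8" and i: "i permutes {1..n}" "i \<circ> i = id"
  obtains y ys where "y permutes {1..n}" "y \<noteq> id" "y ^^ 3 = id" "i \<circ> y = y \<circ> i"
    "length ys \<le> 6" "\<And>x. x \<notin> set ys \<Longrightarrow> y x = x"
proof -
  define F where "F = {x \<in> {1..n}. i x = x}"
  define M where "M = {x \<in> {1..n}. i x \<noteq> x}"
  have "card F + card M = card (F \<union> M)"
    by (rule card_Un_disjoint[symmetric]) (auto simp: F_def M_def)
  also have "F \<union> M = {1..n}" by (auto simp: F_def M_def)
  finally have "card F + card M = n" by simp
  then consider "card F \<ge> 3" | "card M \<ge> 5" using n by linarith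
  then show ?thesis
  proof cases
    case 1
    have "finite F" by (simp add: F_def)
    obtain a where a: "a \<in> F" using obtain_fresh[of F "[]"] \<open>finite F\<close> 1 by auto
    obtain b where b: "b \<in> F" "b \<notin> set [a]"
      using obtain_fresh[of F "[a]"] \<open>finite F\<close> 1 by auto
    obtain c where c: "c \<in> F" "c \<notin> set [a, b]"
      using obtain_fresh[of F "[a, b]"] \<open>finite F\<close> 1 by auto
    have abc: "distinct [a, b, c]" "{a, b, c} \<subseteq> {1..n}" using a b c unfolding F_def by auto
    have comm: "i \<circ> cycle_of_list [a, b, c] = cycle_of_list [a, b, c] \<circ> i"
      using a b c permutes_bij[OF i(1)] abc(1) unfolding F_def by (intro commute_cycle_of_list) auto
    have fix_outside: "\<And>x. x \<notin> set [a, b, c] \<Longrightarrow> cycle_of_list [a, b, c] x = x"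
      by (rule id_outside_supp)
    show ?thesis by (rule that[of _ "[a, b, c]", OF three_cycle[OF abc] comm _ fix_outside]) simp
  next
    case 2
    have "finite M" "\<And>x. x \<in> M \<Longrightarrow> i x \<noteq> x" by (auto simp: M_def)
    then obtain a b c where abc: "{a, b, c} \<subseteq> M" "distinct [a, b, c, i a, i b, i c]"
      using involution_obtain_three_pairs[OF i(2)] 2 by blast
    let ?C = "cycle_of_list [a, b, c]" and ?D = "cycle_of_list [i a, i b, i c]"
    have "{a, b, c, i a, i b, i c} \<subseteq> {1..n}"
      using abc(1) permutes_in_image[OF i(1)] unfolding M_def by auto
    then have "distinct [a, b, c]" "{a, b, c} \<subseteq> {1..n}"
      "distinct [i a, i b, i c]" "{i a, i b, i c} \<subseteq> {1..n}"
      using abc(2) by auto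
    note C = three_cycle[OF this(1,2)] and D = three_cycle[OF this(3,4)]
    have CD: "?C \<otimes>\<^bsub>sym_group n\<^esub> ?D = ?D \<otimes>\<^bsub>sym_group n\<^esub> ?C"
      unfolding sym_group_mult using abc(2) by (intro cycles_commute) auto
    interpret group "sym_group n" by (rule sym_group_is_group)
    have "(?C \<otimes>\<^bsub>sym_group n\<^esub> ?D) [^]\<^bsub>sym_group n\<^esub> (3::nat)
        = ?C [^]\<^bsub>sym_group n\<^esub> (3::nat) \<otimes>\<^bsub>sym_group n\<^esub> ?D [^]\<^bsub>sym_group n\<^esub> (3::nat)"
      using CD C(1) D(1) by (intro pow_mult_distrib) (simp_all add: sym_group_carrier)
    then have order_3: "(?C \<circ> ?D) ^^ 3 = id"
      unfolding sym_group_mult sym_group_pow C(3) D(3) by simp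
    have "?D a = a" using abc(2) by (intro id_outside_supp) auto
    moreover have "?C a = b" using abc(2) by simp
    ultimately have "?C \<circ> ?D \<noteq> id" using abc(2) by (metis comp_apply distinct_length_2_or_more id_apply)
    show ?thesis
    proof (rule that[of "?C \<circ> ?D" "[a, b, c, i a, i b, i c]"])
      show "?C \<circ> ?D permutes {1..n}" by (rule permutes_compose[OF D(1) C(1)])
      show "i \<circ> (?C \<circ> ?D) = ?C \<circ> ?D \<circ> i"
        by (rule involution_commutes_with_three_cycle_pair[OF i(2) abc(2)])
      show "(?C \<circ> ?D) x = x" if "x \<notin> set [a, b, c, i a, i b, i c]" for x
        using that by (simp add: id_outside_supp)
    qed (use \<open>?C \<circ> ?D \<noteq> id\<close> order_3 in simp_all)
  qed
qed

lemma rpg_linked_involution: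
  assumes n: "n \<ge> 8" and i: "i permutes {1..n}" "i \<circ> i = id" "i \<noteq> id"
  shows "rpg_linked (sym_group n) i (transpose 1 2)"
proof -
  obtain y ys where y: "y permutes {1..n}" "y \<noteq> id" "y ^^ 3 = id" "i \<circ> y = y \<circ> i"
    and ys: "length ys \<le> 6" "\<And>x. x \<notin> set ys \<Longrightarrow> y x = x"
    by (rule involution_centralizes_order_three[OF n i(1,2)]) (rule that)
  have "length ys < card {1..n}" using ys(1) n by simp
  then obtain a where a: "a \<in> {1..n}" "a \<notin> set ys"
    using obtain_fresh[OF finite_atLeastAtMost] by blast
  have "length (a # ys) < card {1..n}" using ys(1) n by simp
  then obtain b where b: "b \<in> {1..n}" "b \<notin> set (a # ys)"
    using obtain_fresh[OF finite_atLeastAtMost] by blast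
  have "i ^^ 2 = id" using i(2) by (simp add: numeral_2_eq_2)
  then have "rpg_linked (sym_group n) i y"
    using sym_group_linked_commuting_primes[OF i(1) y(1) y(4) i(3) y(2) _ y(3)] by simp
  moreover have "y a = a" "y b = b" "a \<noteq> b" using ys(2) a(2) b(2) by auto
  then have "rpg_linked (sym_group n) y (transpose 1 2)"
    using rpg_linked_odd_prime_fixing_two[OF _ y(1-3) _ _ a(1) b(1)] n by simp
  ultimately show ?thesis by (rule rpg_linked_trans)
qed

lemma funpow_eq_id_if_fixes_moved:
  assumes g: "permutation g" "g ^^ q = id" "prime q" "g c \<noteq> c" and fixed: "(g ^^ k) c = c"
  shows "g ^^ k = id"
proof -
  have "least_power g c dvd q" "least_power g c \<noteq> 1"
    using least_power_dvd[OF g(1)] least_power_gt_one[OF g(1,4)] g(2) by auto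
  then have "least_power g c = q" using g(3) unfolding prime_nat_iff by blast
  then have "q dvd k" using least_power_dvd[OF g(1), of c k] fixed by simp
  then obtain m where "k = q * m" by blast
  then show ?thesis using g(2) by (simp flip: funpow_mult)
qed

lemma funpow_eq_if_eq_at_moved:
  assumes g: "permutation g" "g ^^ q = id" "prime q" "g c \<noteq> c"
    and eq: "(g ^^ i) c = (g ^^ j) c"
  shows "g ^^ i = g ^^ j"
proof -
  have "g ^^ i = g ^^ j" if "i \<le> j" "(g ^^ i) c = (g ^^ j) c" for i j
  proof -
    have "(g ^^ (j - i)) c = c"
      using funpow_diff[OF bij_is_inj[OF permutation_bijective[OF g(1)]] that] .
    then have "g ^^ (j - i) = id" by (rule funpow_eq_id_if_fixes_moved[OF g])
    then show ?thesis using that(1) funpow_add[of "j - i" i g] by simp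
  qed
  then show ?thesis using eq by (metis nat_le_linear)
qed

lemma funpow_orbit_closed:
  assumes "g ^^ q = id" "q > 0" "(g ^^ i) x \<in> range (\<lambda>j. (g ^^ j) y)"
  shows "x \<in> range (\<lambda>j. (g ^^ j) y)"
proof -
  obtain j where j: "(g ^^ i) x = (g ^^ j) y" using assms(3) by blast
  have "x = (g ^^ (q * i)) x" using assms(1) by (simp flip: funpow_mult)
  also have "\<dots> = (g ^^ (q * i - i)) ((g ^^ i) x)"
    using assms(2) by (simp flip: funpow_add[unfolded comp_def, THEN fun_cong])
  also have "\<dots> = (g ^^ (q * i - i + j)) y" by (simp add: j funpow_add)
  finally show ?thesis by blast
qed

text \<open>Exchanges the \<open>\<langle>g\<rangle>\<close>-orbits of \<open>c\<close> and \<open>e\<close> by \<open>g\<^sup>i c \<leftrightarrow> g\<^sup>i e\<close>; the choice of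
  \<open>i\<close> does not matter when \<open>g\<close> has prime order and moves \<open>c\<close> and \<open>e\<close>
  (\<open>funpow_eq_if_eq_at_moved\<close>).\<close>
definition orbit_swap :: "('a \<Rightarrow> 'a) \<Rightarrow> 'a \<Rightarrow> 'a \<Rightarrow> 'a \<Rightarrow> 'a" where
  "orbit_swap g c e x =
    (if x \<in> range (\<lambda>i. (g ^^ i) c) then (g ^^ (SOME i. x = (g ^^ i) c)) e
     else if x \<in> range (\<lambda>i. (g ^^ i) e) then (g ^^ (SOME i. x = (g ^^ i) e)) c
     else x)"

locale prime_order_two_orbits =
  fixes g :: "'a \<Rightarrow> 'a" and q :: nat and c e :: 'a
  assumes permutation: "permutation g" and order: "g ^^ q = id" and prime: "prime q"
    and moves: "g c \<noteq> c" "g e \<noteq> e" and distinct_orbits: "e \<notin> range (\<lambda>i. (g ^^ i) c)"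
begin

abbreviation "s \<equiv> orbit_swap g c e"

lemma q_pos: "q > 0" using prime by (simp add: prime_gt_0_nat)

lemma orbits_disjoint: "(g ^^ i) e \<notin> range (\<lambda>j. (g ^^ j) c)"
  using funpow_orbit_closed[OF order q_pos] distinct_orbits by blast

lemma swap_first: "s ((g ^^ i) c) = (g ^^ i) e"
proof -
  have "(g ^^ i) c = (g ^^ (SOME j. (g ^^ i) c = (g ^^ j) c)) c" by (rule someI) simp
  then have "g ^^ (SOME j. (g ^^ i) c = (g ^^ j) c) = g ^^ i"
    by (metis funpow_eq_if_eq_at_moved[OF permutation order prime moves(1)])
  then show ?thesis unfolding orbit_swap_def by simp
qed

lemma swap_second: "s ((g ^^ i) e) = (g ^^ i) c"
proof -
  have "(g ^^ i) e = (g ^^ (SOME j. (g ^^ i) e = (g ^^ j) e)) e" by (rule someI) simp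
  then have "g ^^ (SOME j. (g ^^ i) e = (g ^^ j) e) = g ^^ i"
    by (metis funpow_eq_if_eq_at_moved[OF permutation order prime moves(2)])
  then show ?thesis using orbits_disjoint[of i] unfolding orbit_swap_def by simp
qed

lemma swap_other:
  "x \<notin> range (\<lambda>i. (g ^^ i) c) \<Longrightarrow> x \<notin> range (\<lambda>i. (g ^^ i) e) \<Longrightarrow> s x = x"
  unfolding orbit_swap_def by simp

lemma swap_involution: "s \<circ> s = id"
proof
  fix x
  consider i where "x = (g ^^ i) c" | i where "x = (g ^^ i) e"
    | "x \<notin> range (\<lambda>i. (g ^^ i) c)" "x \<notin> range (\<lambda>i. (g ^^ i) e)"
    by blast
  then show "(s \<circ> s) x = id x"
    by cases (simp_all add: swap_first swap_second swap_other)
qed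

lemma swap_commutes: "s \<circ> g = g \<circ> s"
proof
  fix x
  consider i where "x = (g ^^ i) c" | i where "x = (g ^^ i) e"
    | "x \<notin> range (\<lambda>i. (g ^^ i) c)" "x \<notin> range (\<lambda>i. (g ^^ i) e)"
    by blast
  then show "(s \<circ> g) x = (g \<circ> s) x"
  proof cases
    case (1 i)
    then show ?thesis using swap_first[of i] swap_first[of "Suc i"] by simp
  next
    case (2 i)
    then show ?thesis using swap_second[of i] swap_second[of "Suc i"] by simp
  next
    case 3
    then have "g x \<notin> range (\<lambda>i. (g ^^ i) c)" "g x \<notin> range (\<lambda>i. (g ^^ i) e)"
      using funpow_orbit_closed[OF order q_pos, of 1 x] by auto
    then show ?thesis using 3 by (simp add: swap_other)
  qed
qed

lemma swap_permutes:
  assumes "g permutes S"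
  shows "s permutes S"
proof -
  have "s x = x" if "x \<notin> S" for x
    using that permutes_not_in[OF assms] moves permutes_in_funpow_image[OF assms]
    by (intro swap_other) auto
  moreover have "bij s" using o_bij[OF swap_involution swap_involution] .
  ultimately show ?thesis by (auto simp: permutes_def bij_iff)
qed

lemma swap_neq_id: "s \<noteq> id"
  using swap_first[of 0] distinct_orbits by (metis funpow_0 id_apply rangeI)

end

lemma commuting_with_single_orbit_is_power:
  assumes psi: "\<psi> permutes S" and g: "g permutes S" and comm: "\<psi> \<circ> g = g \<circ> \<psi>"
    and c: "g c \<noteq> c" and orbit: "\<forall>x\<in>S. g x \<noteq> x \<longrightarrow> x \<in> range (\<lambda>i. (g ^^ i) c)"
    and fixed: "\<forall>a\<in>S. \<forall>b\<in>S. g a = a \<longrightarrow> g b = b \<longrightarrow> a = b"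
  obtains k where "\<psi> = g ^^ k"
proof -
  have comm_pow: "\<psi> ((g ^^ i) x) = (g ^^ i) (\<psi> x)" for i x
    using comm by (induction i) (simp_all add: fun_eq_iff)
  have "c \<in> S" using c permutes_not_in[OF g] by blast
  then have "\<psi> c \<in> S" "g (\<psi> c) \<noteq> \<psi> c"
    using permutes_in_image[OF psi] c comm_pow[of 1 c] permutes_inj[OF psi] by (auto dest: injD)
  then obtain k where k: "\<psi> c = (g ^^ k) c" using orbit by blast
  have "\<psi> x = (g ^^ k) x" for x
  proof (cases "x \<in> S")
    case True
    show ?thesis
    proof (cases "g x = x")
      case False
      then obtain i where x: "x = (g ^^ i) c" using orbit True by blast
      have "\<psi> x = (g ^^ i) ((g ^^ k) c)" using comm_pow[of i c] k x by simp
      also have "\<dots> = (g ^^ k) x" unfolding x by (metis add.commute comp_apply funpow_add)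
      finally show ?thesis .
    next
      case fix_x: True
      have "g (\<psi> x) = \<psi> x" "\<psi> x \<in> S"
        using comm_pow[of 1 x] fix_x permutes_in_image[OF psi] True by auto
      then have "\<psi> x = x" using fixed True fix_x by blast
      moreover have "(g ^^ k) x = x" using fix_x by (induction k) simp_all
      ultimately show ?thesis by simp
    qed
  next
    case False
    then show ?thesis using permutes_not_in[OF psi] permutes_not_in[OF permutes_funpow[OF g]] by simp
  qed
  then show ?thesis using that by blast
qed

lemma card_le_single_orbit_one_fixed:
  assumes S: "finite S" and g: "g ^^ q = id" "q > 0"
    and orbit: "\<forall>x\<in>S. g x \<noteq> x \<longrightarrow> x \<in> range (\<lambda>i. (g ^^ i) c)"
    and fixed: "\<forall>a\<in>S. \<forall>b\<in>S. g a = a \<longrightarrow> g b = b \<longrightarrow> a = b"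
  shows "card S \<le> q + 1"
proof -
  have "(g ^^ i) c \<in> (\<lambda>i. (g ^^ i) c) ` {..<q}" for i
    using funpow_mod_eq[where f = g and n = q and x = c and m = i] g
    by (intro image_eqI[where x = "i mod q"]) auto
  then have "x \<in> (\<lambda>i. (g ^^ i) c) ` {..<q}" if "x \<in> range (\<lambda>i. (g ^^ i) c)" for x
    using that by blast
  then have "S \<subseteq> (\<lambda>i. (g ^^ i) c) ` {..<q} \<union> {x \<in> S. g x = x}" using orbit by blast
  then have "card S \<le> card ((\<lambda>i. (g ^^ i) c) ` {..<q} \<union> {x \<in> S. g x = x})"
    using S by (intro card_mono) auto
  also have "\<dots> \<le> card ((\<lambda>i. (g ^^ i) c) ` {..<q}) + card {x \<in> S. g x = x}"
    by (rule card_Un_le)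
  finally have "card S \<le> card ((\<lambda>i. (g ^^ i) c) ` {..<q}) + card {x \<in> S. g x = x}" .
  moreover have "card ((\<lambda>i. (g ^^ i) c) ` {..<q}) \<le> q" using card_image_le[of "{..<q}"] by simp
  moreover have "card {x \<in> S. g x = x} \<le> Suc 0" using fixed S by (subst card_le_Suc0_iff_eq) auto
  ultimately show ?thesis by linarith
qed

lemma prime_order_linked_or_long_cycle:
  assumes n: "n \<ge> 8" and g: "g permutes {1..n}" "g \<noteq> id" "g ^^ q = id" "prime q"
  obtains "rpg_linked (sym_group n) g (transpose 1 2)"
  | c where "g c \<noteq> c" "\<forall>x\<in>{1..n}. g x \<noteq> x \<longrightarrow> x \<in> range (\<lambda>i. (g ^^ i) c)"
      "\<forall>a\<in>{1..n}. \<forall>b\<in>{1..n}. g a = a \<longrightarrow> g b = b \<longrightarrow> a = b"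
proof (cases "q = 2")
  case True
  then have "g \<circ> g = id" using g(3) by (simp add: numeral_2_eq_2)
  then show ?thesis by (rule that(1)[OF rpg_linked_involution[OF n g(1) _ g(2)]])
next
  case odd: False
  show ?thesis
  proof (cases "\<exists>a\<in>{1..n}. \<exists>b\<in>{1..n}. a \<noteq> b \<and> g a = a \<and> g b = b")
    case True
    then obtain a b where "a \<in> {1..n}" "b \<in> {1..n}" "a \<noteq> b" "g a = a" "g b = b" by blast
    from rpg_linked_odd_prime_fixing_two[OF _ g odd this] n show ?thesis
      by (intro that(1)) simp
  next
    case few_fixed: False
    obtain c where c: "g c \<noteq> c" using g(2) by (metis eq_id_iff)
    show ?thesis
    proof (cases "\<exists>e. g e \<noteq> e \<and> e \<notin> range (\<lambda>i. (g ^^ i) c)")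
      case True
      then obtain e where e: "g e \<noteq> e" "e \<notin> range (\<lambda>i. (g ^^ i) c)" by blast
      have "permutation g" using g(1) permutation_permutes by blast
      then interpret prime_order_two_orbits g q c e
        using g(3,4) c e by unfold_locales
      have s: "s permutes {1..n}" using swap_permutes[OF g(1)] .
      have "s ^^ 2 = id" using swap_involution by (simp add: numeral_2_eq_2)
      then have "rpg_linked (sym_group n) g s"
        using sym_group_linked_commuting_primes[OF g(1) s swap_commutes[symmetric] g(2) swap_neq_id g(3) _ g(4)] odd
        by simp
      moreover have "rpg_linked (sym_group n) s (transpose 1 2)"
        using rpg_linked_involution[OF n s swap_involution swap_neq_id] .
      ultimately show ?thesis by (rule that(1)[OF rpg_linked_trans])
    next
      case False
      show ?thesis
      proof (rule that(2)[OF c])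
        show "\<forall>x\<in>{1..n}. g x \<noteq> x \<longrightarrow> x \<in> range (\<lambda>i. (g ^^ i) c)" using False by blast
        show "\<forall>a\<in>{1..n}. \<forall>b\<in>{1..n}. g a = a \<longrightarrow> g b = b \<longrightarrow> a = b" using few_fixed by blast
      qed
    qed
  qed
qed

lemma (in group) ord_pow_div_prime:
  assumes "finite (carrier G)" "x \<in> carrier G" "prime q" "q dvd ord x"
  shows "ord (x [^] (ord x div q)) = q"
proof -
  obtain m where m: "ord x = q * m" using assms(4) by blast
  have "q > 0" using assms(3) by (rule prime_gt_0_nat)
  moreover have "m \<noteq> 0" using ord_ge_1[OF assms(1,2)] m by auto
  ultimately have "ord x div q = m" "ord x div m = q" using m by simp_all
  then show ?thesis using ord_pow[OF assms(2), of m] m \<open>m \<noteq> 0\<close> by simp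
qed

lemma sym_group_prime_order_power:
  assumes psi: "\<psi> \<in> carrier (sym_group n)" "\<psi> \<noteq> id"
  obtains q g where "prime q" "g permutes {1..n}" "g \<noteq> id" "g ^^ q = id"
    "\<psi> \<circ> g = g \<circ> \<psi>" "rpg_linked (sym_group n) \<psi> g"
proof -
  interpret group "sym_group n" by (rule sym_group_is_group)
  have fin: "finite (carrier (sym_group n))"
    using sym_group_card_carrier[of n] by (simp add: card_ge_0_finite)
  have "ord \<psi> \<noteq> 1" using ord_eq_1[OF psi(1)] psi(2) by (simp add: sym_group_one)
  then obtain q where q: "prime q" "q dvd ord \<psi>" using prime_factor_nat by blast
  define g where "g = \<psi> [^]\<^bsub>sym_group n\<^esub> (ord \<psi> div q)"
  have g_carrier: "g \<in> carrier (sym_group n)" and "ord g = q"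
    unfolding g_def using psi(1) ord_pow_div_prime[OF fin psi(1) q] by simp_all
  then have "g \<noteq> \<one>\<^bsub>sym_group n\<^esub>" "g [^]\<^bsub>sym_group n\<^esub> q = \<one>\<^bsub>sym_group n\<^esub>"
    using ord_eq_1[OF g_carrier] q(1) by auto
  then have g: "g permutes {1..n}" "g \<noteq> id" "g ^^ q = id"
    using g_carrier by (simp_all add: sym_group_carrier sym_group_one sym_group_pow)
  moreover have "\<psi> \<circ> g = g \<circ> \<psi>"
    unfolding g_def sym_group_pow by (metis funpow_Suc_right funpow.simps(2))
  moreover have "rpg_linked (sym_group n) \<psi> g"
    unfolding g_def using psi(2) \<open>g \<noteq> \<one>\<^bsub>sym_group n\<^esub>\<close>
    by (intro rpg_linked_pow[OF psi(1)]) (simp_all add: g_def sym_group_one)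
  ultimately show ?thesis using that q(1) by blast
qed

theorem proposition7p8:
  fixes n :: nat and \<psi> :: "nat \<Rightarrow> nat"
  assumes "n \<ge> 8"
    and "\<psi> \<in> carrier (sym_group n)" and "\<psi> \<noteq> id"
    and "\<not> (prime (group.ord (sym_group n) \<psi>) \<and> group.ord (sym_group n) \<psi> \<ge> n - 1)"
  shows "rpg_connected (sym_group n) (pclass (sym_group n) (Transposition.transpose 1 2))
           (pclass (sym_group n) \<psi>)"
proof -
  have psi: "\<psi> permutes {1..n}" using assms(2) by (simp add: sym_group_carrier)
  obtain q g where q: "prime q" and g: "g permutes {1..n}" "g \<noteq> id" "g ^^ q = id"
    and comm: "\<psi> \<circ> g = g \<circ> \<psi>" and "rpg_linked (sym_group n) \<psi> g"
    by (rule sym_group_prime_order_power[OF assms(2,3)]) (rule that)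
  from prime_order_linked_or_long_cycle[OF assms(1) g q] show ?thesis
  proof cases
    case 1
    then have "rpg_linked (sym_group n) (transpose 1 2) \<psi>"
      by (rule rpg_linked_sym[OF rpg_linked_trans[OF \<open>rpg_linked _ \<psi> g\<close>]])
    then show ?thesis unfolding rpg_linked_def .
  next
    case (2 c)
    obtain k where "\<psi> = g ^^ k"
      by (rule commuting_with_single_orbit_is_power[OF psi g(1) comm 2]) (rule that)
    then have "\<psi> ^^ q = (g ^^ q) ^^ k" by (simp only: funpow_mult mult.commute)
    then have "group.ord (sym_group n) \<psi> = q"
      using sym_group_ord_eq_prime[OF psi assms(3) _ q] g(3) by simp
    moreover have "card {1..n} \<le> q + 1"
      by (rule card_le_single_orbit_one_fixed[OF finite_atLeastAtMost g(3) prime_gt_0_nat[OF q] 2(2,3)])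
    ultimately have False using assms(4) q by simp
    then show ?thesis ..
  qed
qed

end
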